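(* Let $\delta>0$, let $Y_0\in\mathbb R^d$ with $\|Y_0\|=1$ and all coordinates $>\delta$, let $n>0$ and $X_0=nY_0$, and let $(X_k)$ be the chain $X_k=A_{I_k}X_{k-1}+b_{I_k}(Z_k)$. Let $\mathbb E_Z[X_k]$ denote the expectation of $X_k$ with respect to $Z_1,\dots,Z_k$ only (i.e. conditional on $I_1,\dots,I_k$). Then there exists a constant $c>0$, independent of $k$ and $n$, such that $$\mathbb P\left[\left|\ln\left(\frac{\|\mathbb E_Z[X_k]\|}{n}\right)-k\alpha\right|\geq t\sqrt k\right]\leq 2e^{-ct^2}$$ for all $t>0$ and all $k$ sufficiently large.
   Context: $d\ge2$; $P=(p_{ij})$ is the transition matrix of a connected network on $\{1,\dots,d\}$ without loops ($p_{ii}=0$, irreducible). For $x\in\mathbb R^d$, $\hat x_i=\sum_j p_{ij}x_j$. Fix $e_1,\dots,e_d\in(0,1)$ and $\sigma_1,\dots,\sigma_d>0$. $A_i$ is the linear map with $(A_ix)_j=x_j$ for $j\ne i$ and $(A_ix)_i=e_i\hat x_i$; $b_i:\mathbb R\to\mathbb R^d$ has $(b_i(z))_i=\sigma_iz$ and other coordinates $0$. $I_1,Z_1,I_2,Z_2,\dots$ are independent, $I_k$ uniform on $\{1,\dots,d\}$, $Z_k\sim\gamma$, where $\gamma$ is an absolutely continuous probability measure on $\mathbb R$ with mean zero. $\|\cdot\|$ is the Euclidean norm. Let $\mathcal S$ be the set of unit vectors with strictly positive coordinates and let $\nu$ be the unique probability measure on $\mathcal S$ that is the limiting law (for any starting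 point in $\mathcal S$) of the chain $Y_k=A_{I_k}Y_{k-1}/\|A_{I_k}Y_{k-1}\|$. Define $\alpha:=\mathbb E[\ln\|A_I\overline Y_0\|]$, where $\overline Y_0\sim\nu$ and $I$ is uniform on $\{1,\dots,d\}$, independent; then $\alpha\in(-\infty,0)$. *)

theory Defs
  imports "HOL-Probability.Probability"
begin

text \<open>Coordinates are indexed by a finite type 'n with CARD('n) = d.
  P is a real matrix (rows: P $ i), e and sigma are vectors of parameters.\<close>

definition hatx :: "real^'n^'n \<Rightarrow> real^'n \<Rightarrow> 'n \<Rightarrow> real" where
  "hatx P x i = (\<Sum>j\<in>UNIV. P $ i $ j * x $ j)"

definition Amap :: "real^'n^'n \<Rightarrow> real^'n \<Rightarrow> 'n \<Rightarrow> real^'n \<Rightarrow> real^'n" where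
  "Amap P e i x = (\<chi> j. if j = i then e $ i * hatx P x i else x $ j)"

definition bmap :: "real^'n \<Rightarrow> 'n \<Rightarrow> real \<Rightarrow> real^'n" where
  "bmap \<sigma> i z = (\<chi> j. if j = i then \<sigma> $ i * z else 0)"

definition transition_matrix :: "real^'n^'n \<Rightarrow> bool" where
  "transition_matrix P \<longleftrightarrow> (\<forall>i j. 0 \<le> P $ i $ j) \<and> (\<forall>i. (\<Sum>j\<in>UNIV. P $ i $ j) = 1)"

definition irreducible_no_loops :: "real^'n^'n \<Rightarrow> bool" where
  "irreducible_no_loops P \<longleftrightarrow> (\<forall>i. P $ i $ i = 0) \<and>
     (\<forall>i j. (i, j) \<in> {(a, b). P $ a $ b > 0}\<^sup>+)"

definition Spos :: "(real^'n) set" where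
  "Spos = {y. norm y = 1 \<and> (\<forall>i. 0 < y $ i)}"

text \<open>Projective chain Y_k driven by the index sequence is = [I_1, ..., I_k].\<close>
definition Ychain :: "real^'n^'n \<Rightarrow> real^'n \<Rightarrow> 'n list \<Rightarrow> real^'n \<Rightarrow> real^'n" where
  "Ychain P e is y = fold (\<lambda>i v. (1 / norm (Amap P e i v)) *\<^sub>R Amap P e i v) is y"

definition Ilaw :: "nat \<Rightarrow> 'n list pmf" where
  "Ilaw k = pmf_of_set {is. length is = k}"

definition weak_conv_vec :: "(nat \<Rightarrow> (real^'n) measure) \<Rightarrow> (real^'n) measure \<Rightarrow> bool" where
  "weak_conv_vec M N \<longleftrightarrow>
     (\<forall>f. continuous_on UNIV f \<longrightarrow> bounded (range f) \<longrightarrow>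
        (\<lambda>k. \<integral>x. (f x :: real) \<partial>M k) \<longlonglongrightarrow> (\<integral>x. f x \<partial>N))"

text \<open>alpha = E[ln |A_I Ybar_0|], Ybar_0 ~ nu, I uniform and independent.\<close>
definition alpha_const :: "real^'n^'n \<Rightarrow> real^'n \<Rightarrow> (real^'n) measure \<Rightarrow> real" where
  "alpha_const P e \<nu> = (\<integral>y. (\<Sum>i\<in>UNIV. ln (norm (Amap P e i y))) / real CARD('n) \<partial>\<nu>)"

text \<open>The affine chain X_k = A_{I_k} X_{k-1} + b_{I_k}(Z_k), with I_{j+1} = is ! j, Z_{j+1} = zs j.\<close>
fun Xchain :: "real^'n^'n \<Rightarrow> real^'n \<Rightarrow> real^'n \<Rightarrow> real^'n \<Rightarrow> 'n list \<Rightarrow> (nat \<Rightarrow> real) \<Rightarrow> nat \<Rightarrow> real^'n" where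
  "Xchain P e \<sigma> x0 is zs 0 = x0"
| "Xchain P e \<sigma> x0 is zs (Suc k) =
     Amap P e (is ! k) (Xchain P e \<sigma> x0 is zs k) + bmap \<sigma> (is ! k) (zs k)"

text \<open>E_Z[X_k]: expectation over Z_1..Z_k (i.i.d. gamma) for fixed I_1..I_k.\<close>
definition EZ_X :: "real^'n^'n \<Rightarrow> real^'n \<Rightarrow> real^'n \<Rightarrow> real measure \<Rightarrow> real^'n \<Rightarrow> 'n list \<Rightarrow> nat \<Rightarrow> real^'n" where
  "EZ_X P e \<sigma> \<gamma> x0 is k = (\<integral>zs. Xchain P e \<sigma> x0 is zs k \<partial>(PiM {..<k} (\<lambda>_. \<gamma>)))"

end

theory Submission
  imports Defs
begin

text \<open>Since the noise is centred, \<open>E\<^sub>Z[X\<^sub>k] = n A\<^bsub>I\<^sub>k\<^esub> \<cdots> A\<^bsub>I\<^sub>1\<^esub> Y\<^sub>0\<close>, so the quantity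
  to control is \<open>F(I\<^sub>1, \<dots>, I\<^sub>k) = ln |A\<^bsub>I\<^sub>k\<^esub> \<cdots> A\<^bsub>I\<^sub>1\<^esub> Y\<^sub>0|\<close>, a function of
  \<open>k\<close> independent uniform letters. The all-ones vector is excessive for every \<open>A\<^sub>i\<close>, and
  irreducibility gives a Harnack inequality for excessive vectors; hence all coordinates of the
  normalised chain \<open>Y\<^sub>k\<close> stay above a fixed \<open>ymin > 0\<close>. Consequently \<open>F\<close> is additive up to a
  bounded error under concatenation, and changing one letter moves it by a bounded amount.
  McDiarmid's inequality gives Gaussian concentration of \<open>F\<close> around its mean at scale \<open>\<surd>k\<close>.
  The mean increases by \<open>E[ln |A\<^sub>I Y\<^sub>k|]\<close> at each step, which tends to \<open>\<alpha>\<close> by the weak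
  convergence of \<open>Y\<^sub>k\<close> to \<open>\<nu>\<close>; with almost additivity this pins the mean to \<open>k \<alpha>\<close> up to a
  bounded error.\<close>

abbreviation Aprod :: "real^'n^'n \<Rightarrow> real^'n \<Rightarrow> 'n list \<Rightarrow> real^'n \<Rightarrow> real^'n" where
  "Aprod P e xs \<equiv> fold (Amap P e) xs"

lemma hatx_add: "hatx P (x + y) i = hatx P x i + hatx P y i"
  by (simp add: hatx_def algebra_simps sum.distrib)

lemma hatx_scaleR: "hatx P (c *\<^sub>R x) i = c * hatx P x i"
  by (simp add: hatx_def algebra_simps sum_distrib_left)

lemma bounded_linear_Amap: "bounded_linear (Amap P e i)"
proof -
  have "linear (Amap P e i)"
    by (intro linearI) (simp_all add: Amap_def hatx_add hatx_scaleR vec_eq_iff algebra_simps)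
  then show ?thesis
    by (simp add: linear_conv_bounded_linear)
qed

lemma Aprod_scaleR: "Aprod P e xs (c *\<^sub>R x) = c *\<^sub>R Aprod P e xs x"
  by (induction xs arbitrary: x) (simp_all add: linear_simps(5)[OF bounded_linear_Amap])

lemma Amap_mono:
  assumes "transition_matrix P" "\<forall>i. 0 \<le> e $ i" "\<And>j. x $ j \<le> y $ j"
  shows "Amap P e i x $ j \<le> Amap P e i y $ j"
proof -
  have "hatx P x i \<le> hatx P y i"
    using assms unfolding hatx_def transition_matrix_def by (intro sum_mono mult_left_mono) auto
  then show ?thesis
    using assms by (auto simp: Amap_def intro: mult_left_mono)
qed

lemma Aprod_mono:
  assumes "transition_matrix P" "\<forall>i. 0 \<le> e $ i" "\<And>j. x $ j \<le> y $ j"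
  shows "Aprod P e xs x $ j \<le> Aprod P e xs y $ j"
  using assms(3)
proof (induction xs arbitrary: x y)
  case (Cons i xs)
  then show ?case
    using Amap_mono[OF assms(1,2)] by simp
qed simp

lemma hatx_pos:
  assumes "transition_matrix P" "\<And>j. 0 < x $ j"
  shows "0 < hatx P x i"
proof -
  obtain j where "P $ i $ j \<noteq> 0"
  proof (rule ccontr)
    assume "\<not> thesis"
    then have "(\<Sum>j\<in>UNIV. P $ i $ j) = 0"
      using that by (metis (no_types) sum.neutral)
    with assms(1) show False
      by (simp add: transition_matrix_def)
  qed
  then have "0 < P $ i $ j * x $ j"
    using assms by (simp add: transition_matrix_def less_le)
  also have "\<dots> \<le> hatx P x i"
    using assms unfolding hatx_def transition_matrix_def
    by (intro member_le_sum) (auto simp: less_imp_le)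
  finally show ?thesis .
qed

lemma Aprod_pos:
  assumes "transition_matrix P" "\<forall>i. 0 < e $ i" "\<And>j. 0 < x $ j"
  shows "0 < Aprod P e xs x $ j"
  using assms(3)
proof (induction xs arbitrary: x)
  case (Cons i xs)
  have "0 < Amap P e i x $ j" for j
    using hatx_pos[OF assms(1) Cons.prems] assms(2) Cons.prems by (simp add: Amap_def)
  then show ?case
    using Cons.IH by simp
qed simp

lemma norm_pos_if_components_pos:
  fixes x :: "real^'n"
  assumes "\<And>j. 0 < x $ j"
  shows "0 < norm x"
  using assms[of undefined] component_le_norm_cart[of x undefined] by linarith

lemma norm_le_if_components_le:
  fixes x y :: "real^'n"
  assumes "\<And>j. 0 \<le> x $ j" "\<And>j. x $ j \<le> y $ j"
  shows "norm x \<le> norm y"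
  by (rule norm_le_componentwise_cart) (use assms in \<open>simp add: abs_of_nonneg order_trans[OF _ assms(2)]\<close>)

lemma Ychain_eq_normalized_Aprod:
  assumes "transition_matrix P" "\<forall>i. 0 < e $ i" "\<And>j. 0 < y $ j" "norm y = 1"
  shows "Ychain P e xs y = (1 / norm (Aprod P e xs y)) *\<^sub>R Aprod P e xs y"
  using assms(3,4)
proof (induction xs arbitrary: y)
  case Nil
  then show ?case by (simp add: Ychain_def)
next
  case (Cons i xs)
  define v where "v = Amap P e i y"
  have v_pos: "\<And>j. 0 < v $ j"
    using Aprod_pos[OF assms(1,2) Cons.prems(1), of "[i]"] by (simp add: v_def)
  then have norm_v: "0 < norm v"
    by (rule norm_pos_if_components_pos)
  have "Ychain P e (i # xs) y = Ychain P e xs ((1 / norm v) *\<^sub>R v)"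
    by (simp add: Ychain_def v_def)
  also have "\<dots> = (1 / norm (Aprod P e xs ((1 / norm v) *\<^sub>R v))) *\<^sub>R Aprod P e xs ((1 / norm v) *\<^sub>R v)"
    by (rule Cons.IH) (use v_pos norm_v in simp_all)
  finally show ?case
    using norm_v by (simp add: Aprod_scaleR v_def)
qed

definition excessive :: "real^'n^'n \<Rightarrow> real^'n \<Rightarrow> real^'n \<Rightarrow> bool" where
  "excessive P e r \<longleftrightarrow> (\<forall>j. 0 \<le> r $ j) \<and> (\<forall>i. e $ i * hatx P r i \<le> r $ i)"

lemma excessive_Amap:
  assumes "transition_matrix P" "\<forall>i. 0 \<le> e $ i" "excessive P e r"
  shows "excessive P e (Amap P e k r)"
proof -
  have below: "Amap P e k r $ j \<le> r $ j" for j
    using assms(3) by (auto simp: Amap_def excessive_def)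
  have "0 \<le> hatx P r k"
    using assms unfolding hatx_def excessive_def transition_matrix_def by (auto intro!: sum_nonneg)
  then have nonneg: "0 \<le> Amap P e k r $ j" for j
    using assms by (auto simp: Amap_def excessive_def)
  have "hatx P (Amap P e k r) i \<le> hatx P r i" for i
    using assms(1) below unfolding hatx_def transition_matrix_def
    by (intro sum_mono mult_left_mono) auto
  then have "e $ i * hatx P (Amap P e k r) i \<le> e $ i * hatx P r i" for i
    using assms(2) by (simp add: mult_left_mono)
  then have "e $ i * hatx P (Amap P e k r) i \<le> Amap P e k r $ i" for i
    using assms(3) by (fastforce simp: Amap_def excessive_def intro: order_trans)
  with nonneg show ?thesis
    by (simp add: excessive_def)
qed

lemma excessive_Aprod:
  assumes "transition_matrix P" "\<forall>i. 0 \<le> e $ i" "excessive P e r"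
  shows "excessive P e (Aprod P e xs r)"
  using assms(3) by (induction xs arbitrary: r) (auto intro: excessive_Amap[OF assms(1,2)])

lemma excessive_ones:
  assumes "transition_matrix P" "\<forall>i. e $ i \<le> 1"
  shows "excessive P e (\<chi> _. 1)"
  using assms by (simp add: excessive_def hatx_def transition_matrix_def)

lemma excessive_edge:
  assumes "transition_matrix P" "\<forall>i. 0 \<le> e $ i" "excessive P e r"
  shows "e $ i * P $ i $ j * r $ j \<le> r $ i"
proof -
  have "P $ i $ j * r $ j \<le> hatx P r i"
    using assms unfolding hatx_def excessive_def transition_matrix_def by (intro member_le_sum) auto
  then have "e $ i * (P $ i $ j * r $ j) \<le> e $ i * hatx P r i"
    using assms(2) by (simp add: mult_left_mono)
  also have "\<dots> \<le> r $ i"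
    using assms(3) by (simp add: excessive_def)
  finally show ?thesis
    by (simp add: mult.assoc)
qed

lemma excessive_trancl_ratio:
  assumes "transition_matrix P" "\<forall>i. 0 < e $ i"
    and "(i, j) \<in> {(a, b). P $ a $ b > 0}\<^sup>+"
  shows "\<exists>c>0. \<forall>r. excessive P e r \<longrightarrow> c * r $ j \<le> r $ i"
  using assms(3)
proof (induction rule: trancl_induct)
  case (base j)
  then show ?case
    using excessive_edge[OF assms(1)] assms(2) by (intro exI[of _ "e $ i * P $ i $ j"]) (auto simp: less_imp_le)
next
  case (step j l)
  then obtain c where c: "c > 0" "\<forall>r. excessive P e r \<longrightarrow> c * r $ j \<le> r $ i"
    by blast
  have "c * (e $ j * P $ j $ l) * r $ l \<le> r $ i" if r: "excessive P e r" for r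
  proof -
    have "c * (e $ j * P $ j $ l * r $ l) \<le> c * r $ j"
      using excessive_edge[OF assms(1) _ r, of j l] assms(2) c(1) by (simp add: less_imp_le)
    also have "\<dots> \<le> r $ i"
      using c r by blast
    finally show ?thesis
      by (simp add: mult.assoc)
  qed
  moreover have "0 < c * (e $ j * P $ j $ l)"
    using c step assms(2) by auto
  ultimately show ?case
    by (intro exI[of _ "c * (e $ j * P $ j $ l)"]) blast
qed

lemma excessive_harnack:
  assumes "transition_matrix P" "irreducible_no_loops P" "\<forall>i. 0 < e $ i"
  shows "\<exists>c>0. \<forall>r i j. excessive P e r \<longrightarrow> c * r $ j \<le> r $ i"
proof -
  have "\<forall>ij. \<exists>c>0. \<forall>r. excessive P e r \<longrightarrow> c * r $ snd ij \<le> r $ fst ij"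
    using excessive_trancl_ratio[OF assms(1,3)] assms(2) by (auto simp: irreducible_no_loops_def)
  then obtain C where C: "\<And>ij. C ij > 0" "\<And>ij r. excessive P e r \<Longrightarrow> C ij * r $ snd ij \<le> r $ fst ij"
    by metis
  define c where "c = Min (range C)"
  have "c \<in> range C"
    unfolding c_def by (rule Min_in) auto
  then have "c > 0"
    using C by auto
  moreover have "c * r $ j \<le> r $ i" if "excessive P e r" for r i j
  proof -
    have "c * r $ j \<le> C (i, j) * r $ j"
      using that unfolding c_def excessive_def by (intro mult_right_mono Min_le) auto
    also have "\<dots> \<le> r $ i"
      using C(2)[OF that, of "(i, j)"] by simp
    finally show ?thesis .
  qed
  ultimately show ?thesis
    by blast
qed

lemma finite_lists_length: "finite {xs :: 'a::finite list. length xs = k}"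
  using finite_lists_length_eq[of "UNIV :: 'a set" k] by simp

lemma card_lists_length: "card {xs :: 'a::finite list. length xs = k} = CARD('a) ^ k"
  using card_lists_length_eq[of "UNIV :: 'a set" k] by simp

lemma set_pmf_Ilaw: "set_pmf (Ilaw k :: 'a::finite list pmf) = {xs. length xs = k}"
  unfolding Ilaw_def
  by (rule set_pmf_of_set) (auto simp: finite_lists_length Ex_list_of_length)

lemma integrable_Ilaw [simp]: "integrable (measure_pmf (Ilaw k :: 'a::finite list pmf)) (f :: _ \<Rightarrow> real)"
  by (rule integrable_measure_pmf_finite) (simp add: set_pmf_Ilaw finite_lists_length)

lemma expectation_Ilaw:
  fixes f :: "'a::finite list \<Rightarrow> real"
  shows "measure_pmf.expectation (Ilaw k) f = (\<Sum>xs | length xs = k. f xs) / real CARD('a) ^ k"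
  unfolding Ilaw_def
  by (subst integral_pmf_of_set) (auto simp: finite_lists_length card_lists_length Ex_list_of_length)

lemma expectation_uniform:
  fixes f :: "'a::finite \<Rightarrow> real"
  shows "measure_pmf.expectation (pmf_of_set UNIV) f = (\<Sum>i\<in>UNIV. f i) / real CARD('a)"
  by (subst integral_pmf_of_set) auto

lemma sum_lists_length_Suc:
  "(\<Sum>xs | length xs = Suc k. f xs) = (\<Sum>i\<in>(UNIV :: 'a::finite set). \<Sum>xs | length xs = k. f (i # xs))"
proof -
  have "{xs. length xs = Suc k} = case_prod (#) ` (UNIV \<times> {xs :: 'a list. length xs = k})"
    by (auto simp: length_Suc_conv image_iff)
  moreover have "inj_on (case_prod (#)) (UNIV \<times> {xs :: 'a list. length xs = k})"
    by (auto simp: inj_on_def)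
  ultimately show ?thesis
    by (simp add: sum.reindex sum.cartesian_product prod.case_distrib)
qed

lemma expectation_Ilaw_Suc:
  fixes f :: "'a::finite list \<Rightarrow> real"
  shows "measure_pmf.expectation (Ilaw (Suc k)) f =
     measure_pmf.expectation (pmf_of_set UNIV) (\<lambda>i. measure_pmf.expectation (Ilaw k) (\<lambda>xs. f (i # xs)))"
  unfolding expectation_Ilaw expectation_uniform sum_lists_length_Suc
  by (simp add: sum_divide_distrib[symmetric] field_simps)

lemma expectation_Ilaw_0:
  fixes f :: "'a::finite list \<Rightarrow> real"
  shows "measure_pmf.expectation (Ilaw 0) f = f []"
proof -
  have "{xs :: 'a list. length xs = 0} = {[]}"
    by auto
  then show ?thesis
    by (simp add: Ilaw_def pmf_of_set_singleton)
qed

lemma expectation_Ilaw_add: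
  fixes f :: "'a::finite list \<Rightarrow> real"
  shows "measure_pmf.expectation (Ilaw (k + m)) f =
     measure_pmf.expectation (Ilaw k) (\<lambda>xs. measure_pmf.expectation (Ilaw m) (\<lambda>ys. f (xs @ ys)))"
  by (induction k arbitrary: f) (simp_all add: expectation_Ilaw_0 expectation_Ilaw_Suc)

lemma expectation_Ilaw_snoc:
  fixes f :: "'a::finite list \<Rightarrow> real"
  shows "measure_pmf.expectation (Ilaw (Suc k)) f =
     measure_pmf.expectation (Ilaw k) (\<lambda>xs. measure_pmf.expectation (pmf_of_set UNIV) (\<lambda>i. f (xs @ [i])))"
  using expectation_Ilaw_add[of k 1 f] by (simp add: expectation_Ilaw_Suc expectation_Ilaw_0)

lemma expectation_Ilaw_abs_le:
  fixes f :: "'a::finite list \<Rightarrow> real"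
  assumes "\<And>xs. \<bar>f xs\<bar> \<le> C"
  shows "\<bar>measure_pmf.expectation (Ilaw k) f\<bar> \<le> C"
proof -
  have "- C \<le> f xs" "f xs \<le> C" for xs
    using assms[of xs] by linarith+
  then have "- C \<le> measure_pmf.expectation (Ilaw k) f" "measure_pmf.expectation (Ilaw k) f \<le> C"
    by (auto intro!: measure_pmf.integral_ge_const measure_pmf.integral_le_const)
  then show ?thesis
    by linarith
qed

lemma expectation_Ilaw_almost_additive:
  fixes f :: "'a::finite list \<Rightarrow> real"
  assumes "\<And>xs ys. \<bar>f (xs @ ys) - f xs - f ys\<bar> \<le> C"
  shows "\<bar>measure_pmf.expectation (Ilaw (k + m)) f - measure_pmf.expectation (Ilaw k) f
           - measure_pmf.expectation (Ilaw m) f\<bar> \<le> C"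
proof -
  have "measure_pmf.expectation (Ilaw (k + m)) f - measure_pmf.expectation (Ilaw k) f
          - measure_pmf.expectation (Ilaw m) f =
        measure_pmf.expectation (Ilaw k) (\<lambda>xs. measure_pmf.expectation (Ilaw m) (\<lambda>ys. f (xs @ ys) - f xs - f ys))"
    by (simp add: expectation_Ilaw_add Bochner_Integration.integral_diff measure_pmf.prob_space)
  also have "\<bar>\<dots>\<bar> \<le> C"
    by (intro expectation_Ilaw_abs_le assms)
  finally show ?thesis .
qed

lemma Hoeffdings_lemma_uniform:
  fixes v :: "'a::finite \<Rightarrow> real"
  assumes "l > 0" "\<And>i. a \<le> v i" "\<And>i. v i \<le> b" "measure_pmf.expectation (pmf_of_set UNIV) v = 0"
  shows "measure_pmf.expectation (pmf_of_set UNIV) (\<lambda>i. exp (l * v i)) \<le> exp (l\<^sup>2 * (b - a)\<^sup>2 / 8)"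
proof -
  interpret interval_bounded_random_variable "measure_pmf (pmf_of_set UNIV)" v a b
    by unfold_locales (auto simp: assms(2,3))
  have "ennreal (measure_pmf.expectation (pmf_of_set UNIV) (\<lambda>i. exp (l * v i))) =
          nn_integral (measure_pmf (pmf_of_set UNIV)) (\<lambda>i. exp (l * v i))"
    by (rule nn_integral_eq_integral[symmetric]) (auto intro: integrable_measure_pmf_finite)
  also have "\<dots> \<le> ennreal (exp (l\<^sup>2 * (b - a)\<^sup>2 / 8))"
    by (rule Hoeffdings_lemma_nn_integral_0[OF assms(1,4)])
  finally show ?thesis
    by (simp add: ennreal_le_iff2)
qed

definition bounded_differences :: "('a list \<Rightarrow> real) \<Rightarrow> real \<Rightarrow> bool" where
  "bounded_differences f B \<longleftrightarrow> (\<forall>xs ys i j. \<bar>f (xs @ i # ys) - f (xs @ j # ys)\<bar> \<le> B)"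

lemma bounded_differences_Cons:
  "bounded_differences f B \<Longrightarrow> bounded_differences (\<lambda>xs. f (i # xs)) B"
  unfolding bounded_differences_def by (metis append_Cons)

lemma bounded_differences_first_letter:
  fixes f :: "'a::finite list \<Rightarrow> real"
  assumes "bounded_differences f B"
  shows "\<exists>m. \<forall>i. m \<le> measure_pmf.expectation (Ilaw k) (\<lambda>xs. f (i # xs))
                \<and> measure_pmf.expectation (Ilaw k) (\<lambda>xs. f (i # xs)) \<le> m + B"
proof -
  define G where "G i = measure_pmf.expectation (Ilaw k) (\<lambda>xs. f (i # xs))" for i
  have G_diff: "G i - G j \<le> B" for i j
  proof -
    have "G i - G j = measure_pmf.expectation (Ilaw k) (\<lambda>xs. f (i # xs) - f (j # xs))"
      by (simp add: G_def)
    also have "\<dots> \<le> B"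
      using assms unfolding bounded_differences_def
      by (intro measure_pmf.integral_le_const) (auto dest: spec[of _ "[]"] simp: abs_le_iff)
    finally show ?thesis .
  qed
  have "Min (range G) \<in> range G"
    by (rule Min_in) auto
  then obtain j where "Min (range G) = G j"
    by blast
  then have "Min (range G) \<le> G i \<and> G i \<le> Min (range G) + B" for i
    using G_diff[of i j] Min_le[of "range G" "G i"] by simp
  then show ?thesis
    unfolding G_def by blast
qed

text \<open>Induction on the length, splitting off the first letter: given it, the rest satisfies the
  induction hypothesis, and the conditional means vary in an interval of length \<open>B\<close>, to which
  Hoeffding's lemma applies.\<close>
lemma McDiarmid_exp_moment:
  fixes f :: "'a::finite list \<Rightarrow> real"
  assumes "l > 0" "bounded_differences f B"
  shows "measure_pmf.expectation (Ilaw k) (\<lambda>xs. exp (l * (f xs - measure_pmf.expectation (Ilaw k) f)))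
           \<le> exp (l\<^sup>2 * real k * B\<^sup>2 / 8)"
  using assms(2)
proof (induction k arbitrary: f)
  case 0
  then show ?case
    by (simp add: expectation_Ilaw_0)
next
  case (Suc k)
  define G where "G i = measure_pmf.expectation (Ilaw k) (\<lambda>xs. f (i # xs))" for i
  define A where "A = measure_pmf.expectation (Ilaw (Suc k)) f"
  define U where "U = (pmf_of_set UNIV :: 'a pmf)"
  have A: "A = measure_pmf.expectation U G"
    unfolding A_def G_def U_def by (rule expectation_Ilaw_Suc)
  have IH: "measure_pmf.expectation (Ilaw k) (\<lambda>xs. exp (l * (f (i # xs) - G i))) \<le> exp (l\<^sup>2 * real k * B\<^sup>2 / 8)" for i
    unfolding G_def by (rule Suc.IH[OF bounded_differences_Cons[OF Suc.prems]])
  obtain m where G_bounds: "m - A \<le> G i - A" "G i - A \<le> m + B - A" for i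
    using bounded_differences_first_letter[OF Suc.prems, of k] unfolding G_def by fastforce
  have "measure_pmf.expectation (Ilaw (Suc k)) (\<lambda>xs. exp (l * (f xs - A))) =
        measure_pmf.expectation U (\<lambda>i. exp (l * (G i - A)) *
          measure_pmf.expectation (Ilaw k) (\<lambda>xs. exp (l * (f (i # xs) - G i))))"
  proof -
    have "exp (l * (f (i # xs) - A)) = exp (l * (G i - A)) * exp (l * (f (i # xs) - G i))" for i xs
      by (simp add: exp_add[symmetric] algebra_simps)
    then show ?thesis
      unfolding expectation_Ilaw_Suc U_def by (simp only: integral_mult_right_zero)
  qed
  also have "\<dots> \<le> measure_pmf.expectation U (\<lambda>i. exp (l * (G i - A)) * exp (l\<^sup>2 * real k * B\<^sup>2 / 8))"
    using IH by (intro integral_mono mult_left_mono) (auto simp: U_def intro: integrable_measure_pmf_finite)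
  also have "\<dots> = measure_pmf.expectation U (\<lambda>i. exp (l * (G i - A))) * exp (l\<^sup>2 * real k * B\<^sup>2 / 8)"
    by simp
  also have "\<dots> \<le> exp (l\<^sup>2 * ((m + B - A) - (m - A))\<^sup>2 / 8) * exp (l\<^sup>2 * real k * B\<^sup>2 / 8)"
    using G_bounds A unfolding U_def
    by (intro mult_right_mono Hoeffdings_lemma_uniform[OF assms(1)]) (auto simp: expectation_uniform sum_subtractf)
  also have "\<dots> = exp (l\<^sup>2 * real (Suc k) * B\<^sup>2 / 8)"
    by (simp add: exp_add[symmetric] algebra_simps add_divide_distrib)
  finally show ?case
    unfolding A_def .
qed

lemma McDiarmid_upper:
  fixes f :: "'a::finite list \<Rightarrow> real"
  assumes "bounded_differences f B" "B > 0" "k > 0" "s > 0"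
  shows "measure_pmf.prob (Ilaw k) {xs. s \<le> f xs - measure_pmf.expectation (Ilaw k) f}
           \<le> exp (- 2 * s\<^sup>2 / (real k * B\<^sup>2))"
proof -
  define l where "l = 4 * s / (real k * B\<^sup>2)"
  define A where "A = measure_pmf.expectation (Ilaw k) f"
  have l: "l > 0"
    unfolding l_def using assms by simp
  have "{xs \<in> space (measure_pmf (Ilaw k)). exp (l * s) \<le> exp (l * (f xs - A))} = {xs. s \<le> f xs - A}"
    using l by auto
  moreover have "measure_pmf.prob (Ilaw k) {xs \<in> space (measure_pmf (Ilaw k)). exp (l * s) \<le> exp (l * (f xs - A))}
               \<le> measure_pmf.expectation (Ilaw k) (\<lambda>xs. exp (l * (f xs - A))) / exp (l * s)"
    by (rule integral_Markov_inequality_measure[where A = UNIV]) auto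
  ultimately have "measure_pmf.prob (Ilaw k) {xs. s \<le> f xs - A}
               \<le> measure_pmf.expectation (Ilaw k) (\<lambda>xs. exp (l * (f xs - A))) / exp (l * s)"
    by simp
  also have "\<dots> \<le> exp (l\<^sup>2 * real k * B\<^sup>2 / 8) / exp (l * s)"
    unfolding A_def by (intro divide_right_mono McDiarmid_exp_moment[OF l assms(1)]) auto
  also have "\<dots> = exp (- 2 * s\<^sup>2 / (real k * B\<^sup>2))"
    unfolding exp_diff[symmetric] l_def using assms(2,3) by (simp add: field_simps power2_eq_square)
  finally show ?thesis
    unfolding A_def .
qed

theorem McDiarmid_inequality:
  fixes f :: "'a::finite list \<Rightarrow> real"
  assumes "bounded_differences f B" "B > 0" "k > 0" "s > 0"
  shows "measure_pmf.prob (Ilaw k) {xs. s \<le> \<bar>f xs - measure_pmf.expectation (Ilaw k) f\<bar>}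
           \<le> 2 * exp (- 2 * s\<^sup>2 / (real k * B\<^sup>2))"
proof -
  have "bounded_differences (\<lambda>xs. - f xs) B"
    using assms(1) by (auto simp: bounded_differences_def abs_minus_commute)
  from McDiarmid_upper[OF this assms(2-)] McDiarmid_upper[OF assms]
  have "measure_pmf.prob (Ilaw k) {xs. s \<le> f xs - measure_pmf.expectation (Ilaw k) f}
        + measure_pmf.prob (Ilaw k) {xs. s \<le> measure_pmf.expectation (Ilaw k) f - f xs}
          \<le> 2 * exp (- 2 * s\<^sup>2 / (real k * B\<^sup>2))"
    by simp
  moreover have "measure_pmf.prob (Ilaw k) {xs. s \<le> \<bar>f xs - measure_pmf.expectation (Ilaw k) f\<bar>}
      \<le> measure_pmf.prob (Ilaw k) {xs. s \<le> f xs - measure_pmf.expectation (Ilaw k) f}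
        + measure_pmf.prob (Ilaw k) {xs. s \<le> measure_pmf.expectation (Ilaw k) f - f xs}"
    by (rule order_trans[OF measure_pmf.finite_measure_mono measure_Un_le]) (auto simp: abs_le_iff)
  ultimately show ?thesis
    by linarith
qed

lemma almost_additive_linear_bound:
  fixes a :: "nat \<Rightarrow> real"
  assumes almost_additive: "\<And>k m. \<bar>a (k + m) - a k - a m\<bar> \<le> C"
    and increments: "(\<lambda>k. a (Suc k) - a k) \<longlonglongrightarrow> \<alpha>"
  shows "\<bar>a m - real m * \<alpha>\<bar> \<le> C"
proof -
  define s where "s k = (\<Sum>j<m. a (Suc (k + j)) - a (k + j) - \<alpha>)" for k
  have "s \<longlonglongrightarrow> (\<Sum>j<m. \<alpha> - \<alpha>)"
    unfolding s_def using LIMSEQ_ignore_initial_segment[OF increments]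
    by (intro tendsto_intros) simp
  then have "(\<lambda>k. C + \<bar>s k\<bar>) \<longlonglongrightarrow> C"
    by (auto intro: tendsto_eq_intros)
  moreover have "\<bar>a m - real m * \<alpha>\<bar> \<le> C + \<bar>s k\<bar>" for k
  proof -
    have "s k = (\<Sum>j<m. a (Suc (k + j)) - a (k + j)) - real m * \<alpha>"
      unfolding s_def sum_subtractf[of "\<lambda>j. a (Suc (k + j)) - a (k + j)"] by simp
    also have "\<dots> = a (k + m) - a k - real m * \<alpha>"
      using sum_lessThan_telescope[of "\<lambda>j. a (k + j)" m] by simp
    finally have "s k = a (k + m) - a k - real m * \<alpha>" .
    then show ?thesis
      using almost_additive[of k m] by linarith
  qed
  ultimately show ?thesis
    by (intro LIMSEQ_le_const) auto
qed

lemma weak_conv_vec_AE_eq_0: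
  fixes f :: "real^'n \<Rightarrow> real"
  assumes "weak_conv_vec M N" "prob_space N" "sets N = sets borel"
    and "continuous_on UNIV f" "bounded (range f)" "\<And>x. 0 \<le> f x" "\<And>k. (\<integral>x. f x \<partial>M k) = 0"
  shows "AE x in N. f x = 0"
proof -
  interpret N: prob_space N
    by fact
  have "(\<lambda>k. \<integral>x. f x \<partial>M k) \<longlonglongrightarrow> (\<integral>x. f x \<partial>N)"
    using assms(1,4,5) unfolding weak_conv_vec_def by blast
  then have "(\<lambda>k. 0) \<longlonglongrightarrow> (\<integral>x. f x \<partial>N)"
    using assms(7) by simp
  then have "(\<integral>x. f x \<partial>N) = 0"
    by (rule LIMSEQ_unique[OF tendsto_const, symmetric])
  moreover have f_meas: "f \<in> borel_measurable N"
    using borel_measurable_continuous_onI[OF assms(4)] measurable_cong_sets[OF assms(3) refl] by blast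
  moreover obtain B where "\<And>x. \<bar>f x\<bar> \<le> B"
    using assms(5) unfolding bounded_real by auto
  then have "integrable N f"
    using f_meas by (intro N.integrable_const_bound[where B = B]) auto
  ultimately show ?thesis
    using integral_nonneg_eq_0_iff_AE[of N f] assms(6) by simp
qed

lemma integrable_PiM_component:
  fixes \<gamma> :: "real measure"
  assumes "prob_space \<gamma>" "integrable \<gamma> (\<lambda>z. z)" "j \<in> I" "finite I"
  shows "integrable (PiM I (\<lambda>_. \<gamma>)) (\<lambda>zs. zs j)"
    and "(\<integral>zs. zs j \<partial>PiM I (\<lambda>_. \<gamma>)) = (\<integral>z. z \<partial>\<gamma>)"
proof -
  have meas: "(\<lambda>zs. zs j) \<in> measurable (PiM I (\<lambda>_. \<gamma>)) \<gamma>"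
    using measurable_component_singleton[OF assms(3), of "\<lambda>_. \<gamma>"] by simp
  have distr_j: "distr (PiM I (\<lambda>_. \<gamma>)) \<gamma> (\<lambda>zs. zs j) = \<gamma>"
    by (rule distr_PiM_component) (use assms in auto)
  have id_meas: "(\<lambda>z. z) \<in> borel_measurable \<gamma>"
    using assms(2) by (rule borel_measurable_integrable)
  show "integrable (PiM I (\<lambda>_. \<gamma>)) (\<lambda>zs. zs j)"
    using integrable_distr_eq[OF meas id_meas] distr_j assms(2) by simp
  show "(\<integral>zs. zs j \<partial>PiM I (\<lambda>_. \<gamma>)) = (\<integral>z. z \<partial>\<gamma>)"
    using integral_distr[OF meas id_meas] distr_j by simp
qed

lemma integral_Xchain:
  fixes \<gamma> :: "real measure"
  assumes \<gamma>: "prob_space \<gamma>" "integrable \<gamma> (\<lambda>z. z)" "(\<integral>z. z \<partial>\<gamma>) = 0"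
    and "k \<le> m" "k \<le> length xs"
  shows "integrable (PiM {..<m} (\<lambda>_. \<gamma>)) (\<lambda>zs. Xchain P e \<sigma> x0 xs zs k)
    \<and> (\<integral>zs. Xchain P e \<sigma> x0 xs zs k \<partial>PiM {..<m} (\<lambda>_. \<gamma>)) = Aprod P e (take k xs) x0"
proof -
  let ?M = "PiM {..<m} (\<lambda>_. \<gamma>)"
  interpret M: prob_space ?M
    by (rule prob_space_PiM) (use \<gamma> in auto)
  show ?thesis
    using assms(4,5)
  proof (induction k)
    case 0
    then show ?case
      by (simp add: M.prob_space)
  next
    case (Suc k)
    then have IH: "integrable ?M (\<lambda>zs. Xchain P e \<sigma> x0 xs zs k)"
      "(\<integral>zs. Xchain P e \<sigma> x0 xs zs k \<partial>?M) = Aprod P e (take k xs) x0"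
      by auto
    have k: "k < m" "k < length xs"
      using Suc.prems by auto
    define v where "v = bmap \<sigma> (xs ! k) 1"
    have X_Suc: "Xchain P e \<sigma> x0 xs zs (Suc k) = Amap P e (xs ! k) (Xchain P e \<sigma> x0 xs zs k) + zs k *\<^sub>R v" for zs
      by (simp add: v_def bmap_def vec_eq_iff)
    have "(\<integral>zs. Amap P e (xs ! k) (Xchain P e \<sigma> x0 xs zs k) \<partial>?M) = Amap P e (xs ! k) (Aprod P e (take k xs) x0)"
      using integral_bounded_linear[OF bounded_linear_Amap IH(1)] IH(2) by simp
    then show ?case
      unfolding X_Suc using integrable_bounded_linear[OF bounded_linear_Amap IH(1)]
        integrable_PiM_component[OF \<gamma>(1,2), of k "{..<m}"] \<gamma>(3) k
      by (simp add: take_Suc_conv_app_nth)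
  qed
qed

lemma EZ_X_eq_Aprod:
  fixes \<gamma> :: "real measure"
  assumes "prob_space \<gamma>" "integrable \<gamma> (\<lambda>z. z)" "(\<integral>z. z \<partial>\<gamma>) = 0" "length xs = k"
  shows "EZ_X P e \<sigma> \<gamma> x0 xs k = Aprod P e xs x0"
  using integral_Xchain[OF assms(1-3), of k k xs] assms(4) unfolding EZ_X_def by simp

lemma prob_abs_ge_shifted_centre:
  fixes X :: "'a \<Rightarrow> real"
  assumes "\<bar>m - \<mu>\<bar> \<le> r / 2"
  shows "measure_pmf.prob M {x. r \<le> \<bar>X x - \<mu>\<bar>} \<le> measure_pmf.prob M {x. r / 2 \<le> \<bar>X x - m\<bar>}"
proof -
  have "r / 2 \<le> \<bar>X x - m\<bar>" if "r \<le> \<bar>X x - \<mu>\<bar>" for x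
    using that assms abs_triangle_ineq[of "X x - m" "m - \<mu>"] by linarith
  then show ?thesis
    by (intro measure_pmf.finite_measure_mono) auto
qed

text \<open>For large \<open>t\<close> the bounded shift of the centre is absorbed into half of \<open>t \<surd>k\<close>; for small
  \<open>t\<close> the bound \<open>2 exp (- c t\<^sup>2)\<close> exceeds 1 and holds trivially.\<close>
lemma subgaussian_around_line:
  fixes X :: "nat \<Rightarrow> 'a \<Rightarrow> real" and M :: "nat \<Rightarrow> 'a pmf"
  assumes tail: "\<And>k s. 0 < k \<Longrightarrow> 0 < s \<Longrightarrow>
      measure_pmf.prob (M k) {x. s \<le> \<bar>X k x - m k\<bar>} \<le> 2 * exp (- s\<^sup>2 / (real k * D))"
    and D: "D > 0" and centre: "\<And>k. \<bar>m k - real k * \<alpha>\<bar> \<le> C"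
  shows "\<exists>c>0. \<forall>k\<ge>1. \<forall>t>0.
      measure_pmf.prob (M k) {x. t * sqrt (real k) \<le> \<bar>X k x - real k * \<alpha>\<bar>} \<le> 2 * exp (- c * t\<^sup>2)"
proof -
  define C' where "C' = \<bar>C\<bar> + 1"
  define c where "c = min (1 / (4 * D)) (ln 2 / (4 * C'\<^sup>2))"
  have C': "C' > 0" "C \<le> C'"
    unfolding C'_def by auto
  have c_le: "c \<le> 1 / (4 * D)"
    unfolding c_def by simp
  have "c > 0"
    unfolding c_def using D C' by simp
  moreover have "measure_pmf.prob (M k) {x. t * sqrt (real k) \<le> \<bar>X k x - real k * \<alpha>\<bar>} \<le> 2 * exp (- c * t\<^sup>2)"
    if k: "k \<ge> 1" and t: "t > 0" for k t
  proof (cases "2 * C' \<le> t * sqrt (real k)")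
    case True
    define s where "s = t * sqrt (real k) / 2"
    have "measure_pmf.prob (M k) {x. t * sqrt (real k) \<le> \<bar>X k x - real k * \<alpha>\<bar>}
                 \<le> measure_pmf.prob (M k) {x. s \<le> \<bar>X k x - m k\<bar>}"
      unfolding s_def using centre[of k] C' True by (intro prob_abs_ge_shifted_centre) auto
    also have "\<dots> \<le> 2 * exp (- s\<^sup>2 / (real k * D))"
      using k t by (intro tail) (auto simp: s_def)
    also have "- s\<^sup>2 / (real k * D) = - (1 / (4 * D)) * t\<^sup>2"
      using k D by (simp add: s_def power_mult_distrib field_simps)
    also have "exp \<dots> \<le> exp (- c * t\<^sup>2)"
      using mult_right_mono[OF c_le, of "t\<^sup>2"] by simp
    finally show ?thesis
      by simp
  next
    case False
    have "t \<le> t * sqrt (real k)"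
      using k t by (simp add: mult_le_cancel_left1)
    with False have "t < 2 * C'"
      by linarith
    then have "c * t\<^sup>2 \<le> ln 2 / (4 * C'\<^sup>2) * (2 * C')\<^sup>2"
      unfolding c_def using t by (intro mult_mono power_mono) auto
    also have "\<dots> = ln 2"
      using C' by (simp add: power_mult_distrib)
    finally have "exp (- ln 2) \<le> exp (- c * t\<^sup>2)"
      by simp
    then have "1 \<le> 2 * exp (- c * t\<^sup>2)"
      by (simp add: exp_minus field_simps)
    then show ?thesis
      using measure_pmf.prob_le_1[of "M k"] by (rule order_trans[rotated])
  qed
  ultimately show ?thesis
    by blast
qed

definition mean_log_growth :: "real^'n^'n \<Rightarrow> real^'n \<Rightarrow> real^'n \<Rightarrow> real" where
  "mean_log_growth P e y = (\<Sum>i\<in>UNIV. ln (norm (Amap P e i y))) / real CARD('n)"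

lemma borel_measurable_mean_log_growth: "mean_log_growth P e \<in> borel_measurable borel"
proof -
  have [measurable]: "Amap P e i \<in> borel_measurable borel" for i
    by (intro borel_measurable_continuous_onI linear_continuous_on bounded_linear_Amap)
  show ?thesis
    unfolding mean_log_growth_def by measurable
qed

lemma alpha_const_eq: "alpha_const P e \<nu> = (\<integral>y. mean_log_growth P e y \<partial>\<nu>)"
  by (simp add: alpha_const_def mean_log_growth_def)

locale positive_start =
  fixes P :: "real^'n^'n" and e :: "real^'n" and \<delta> :: real and Y0 :: "real^'n"
  assumes transition: "transition_matrix P" and irreducible: "irreducible_no_loops P"
    and e_bounds: "\<forall>i. 0 < e $ i \<and> e $ i < 1"
    and \<delta>_pos: "\<delta> > 0" and norm_Y0: "norm Y0 = 1" and Y0_gt: "\<forall>i. Y0 $ i > \<delta>"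
    and two_le_card: "CARD('n) \<ge> 2"
begin

lemma e_pos: "\<forall>i. 0 < e $ i" and e_nonneg: "\<forall>i. 0 \<le> e $ i" and e_le_1: "\<forall>i. e $ i \<le> 1"
  using e_bounds by (auto simp: less_imp_le)

lemma Y0_pos: "0 < Y0 $ i"
  using Y0_gt \<delta>_pos by (meson less_trans)

lemma Y0_le_1: "Y0 $ i \<le> 1"
  using component_le_norm_cart[of Y0 i] norm_Y0 by simp

lemma \<delta>_less_1: "\<delta> < 1"
  using Y0_gt Y0_le_1 by (meson less_le_trans)

definition harnack :: real where
  "harnack = (SOME c. c > 0 \<and> (\<forall>r i j. excessive P e r \<longrightarrow> c * r $ j \<le> r $ i))"

lemma harnack_pos: "harnack > 0"
  and harnack_le: "excessive P e r \<Longrightarrow> harnack * r $ j \<le> r $ i"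
proof -
  have "harnack > 0 \<and> (\<forall>r i j. excessive P e r \<longrightarrow> harnack * r $ j \<le> r $ i)"
    unfolding harnack_def by (rule someI_ex, rule excessive_harnack[OF transition irreducible e_pos])
  then show "harnack > 0" "excessive P e r \<Longrightarrow> harnack * r $ j \<le> r $ i"
    by auto
qed

lemma Aprod_Y0_pos: "0 < Aprod P e xs Y0 $ j"
  by (rule Aprod_pos[OF transition e_pos Y0_pos])

text \<open>Y0 lies coordinatewise between \<open>\<delta> \<cdot> 1\<close> and the excessive vector \<open>1\<close>, so by monotonicity
  the Harnack inequality for \<open>A\<^sub>x\<^sub>s 1\<close> transfers to \<open>A\<^sub>x\<^sub>s Y0\<close>.\<close>
lemma Aprod_Y0_ratio: "\<delta> * harnack * Aprod P e xs Y0 $ j \<le> Aprod P e xs Y0 $ i"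
proof -
  define r where "r = Aprod P e xs (\<chi> _. 1)"
  have r: "excessive P e r"
    unfolding r_def by (rule excessive_Aprod[OF transition e_nonneg excessive_ones[OF transition e_le_1]])
  have "\<delta> * harnack * Aprod P e xs Y0 $ j \<le> \<delta> * (harnack * r $ j)"
    unfolding r_def using Aprod_mono[OF transition e_nonneg, of Y0 "\<chi> _. 1"] Y0_le_1 harnack_pos \<delta>_pos
    by (simp add: mult.assoc)
  also have "\<dots> \<le> \<delta> * r $ i"
    using harnack_le[OF r, of j i] \<delta>_pos by simp
  also have "\<dots> = Aprod P e xs (\<delta> *\<^sub>R (\<chi> _. 1)) $ i"
    unfolding r_def Aprod_scaleR by simp
  also have "\<dots> \<le> Aprod P e xs Y0 $ i"
    using Y0_gt by (intro Aprod_mono[OF transition e_nonneg]) (simp add: less_imp_le)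
  finally show ?thesis .
qed

abbreviation Y :: "'n list \<Rightarrow> real^'n" where
  "Y xs \<equiv> Ychain P e xs Y0"

definition ymin :: real where
  "ymin = \<delta> * harnack / real CARD('n)"

lemma ymin_pos: "ymin > 0"
  using \<delta>_pos harnack_pos by (simp add: ymin_def)

lemma Y_pos: "0 < Y xs $ i"
  and Y_le_1: "Y xs $ i \<le> 1"
  and ymin_le_Y: "ymin \<le> Y xs $ i"
proof -
  define x where "x = Aprod P e xs Y0"
  have norm_x: "0 < norm x"
    unfolding x_def using Aprod_Y0_pos by (rule norm_pos_if_components_pos)
  have Y_eq: "Y xs = (1 / norm x) *\<^sub>R x"
    unfolding x_def by (rule Ychain_eq_normalized_Aprod[OF transition e_pos Y0_pos norm_Y0])
  have norm_1: "norm (Y xs) = 1"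
    using norm_x Y_eq by simp
  show pos: "0 < Y xs $ i" for i
    using norm_x Y_eq Aprod_Y0_pos by (simp add: x_def)
  show "Y xs $ i \<le> 1"
    using component_le_norm_cart[of "Y xs" i] norm_1 by simp
  have ratio: "\<delta> * harnack * Y xs $ j \<le> Y xs $ i" for i j
    using Aprod_Y0_ratio[of xs j i] norm_x unfolding Y_eq x_def
    by (simp add: divide_right_mono mult.assoc)
  txt \<open>A unit vector has \<open>\<ell>\<^sup>1\<close> norm at least 1, hence a coordinate of size at least \<open>1 / d\<close>.\<close>
  obtain j where j: "1 / real CARD('n) \<le> Y xs $ j"
  proof (rule ccontr)
    assume "\<not> thesis"
    then have small: "Y xs $ j < 1 / real CARD('n)" for j
      using that by (meson not_le)
    have "1 \<le> (\<Sum>j\<in>UNIV. \<bar>Y xs $ j\<bar>)"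
      using norm_le_l1_cart[of "Y xs"] norm_1 by simp
    also have "\<dots> < (\<Sum>j\<in>(UNIV::'n set). 1 / real CARD('n))"
      using small pos by (intro sum_strict_mono) (auto simp: less_imp_le)
    finally show False
      by simp
  qed
  have "ymin \<le> \<delta> * harnack * Y xs $ j"
    unfolding ymin_def using j \<delta>_pos harnack_pos
    by (metis mult_left_mono less_imp_le mult_pos_pos times_divide_eq_right mult_1_right)
  also have "\<dots> \<le> Y xs $ i"
    by (rule ratio)
  finally show "ymin \<le> Y xs $ i" .
qed

lemma norm_Amap_Y_bounds: "ymin \<le> norm (Amap P e i (Y xs))" "norm (Amap P e i (Y xs)) \<le> real CARD('n)"
proof -
  have "\<not> UNIV \<subseteq> {i}"
    using card_mono[of "{i}" UNIV] two_le_card by auto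
  then obtain j where j: "j \<noteq> i"
    by auto
  have "ymin \<le> \<bar>Amap P e i (Y xs) $ j\<bar>"
    using j ymin_le_Y[of xs j] Y_pos[of xs j] by (simp add: Amap_def)
  then show "ymin \<le> norm (Amap P e i (Y xs))"
    using component_le_norm_cart order_trans by blast
  have "hatx P (Y xs) i \<le> (\<Sum>j\<in>UNIV. P $ i $ j * 1)"
    unfolding hatx_def using transition Y_le_1[of xs]
    by (intro sum_mono mult_left_mono) (auto simp: transition_matrix_def)
  also have "\<dots> = 1"
    using transition by (simp add: transition_matrix_def)
  finally have "e $ i * hatx P (Y xs) i \<le> 1"
    using e_le_1 e_nonneg hatx_pos[OF transition Y_pos, of xs i] by (simp add: mult_le_one)
  then have "\<bar>Amap P e i (Y xs) $ k\<bar> \<le> 1" for k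
    using e_pos hatx_pos[OF transition Y_pos, of xs i] Y_pos[of xs k] Y_le_1[of xs k]
    by (simp add: Amap_def abs_of_pos)
  then have "(\<Sum>k\<in>UNIV. \<bar>Amap P e i (Y xs) $ k\<bar>) \<le> (\<Sum>k\<in>(UNIV::'n set). 1)"
    by (rule sum_mono)
  then show "norm (Amap P e i (Y xs)) \<le> real CARD('n)"
    using norm_le_l1_cart[of "Amap P e i (Y xs)"] by simp
qed

definition logn :: "'n list \<Rightarrow> real" where
  "logn xs = ln (norm (Aprod P e xs Y0))"

lemma norm_Aprod_pos: "(\<And>j. 0 < x $ j) \<Longrightarrow> 0 < norm (Aprod P e xs x)"
  by (rule norm_pos_if_components_pos, rule Aprod_pos[OF transition e_pos])

lemma logn_append: "logn (xs @ ys) = logn xs + ln (norm (Aprod P e ys (Y xs)))"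
proof -
  define x where "x = Aprod P e xs Y0"
  have norm_x: "0 < norm x"
    unfolding x_def by (rule norm_Aprod_pos[OF Y0_pos])
  have "x = norm x *\<^sub>R Y xs"
    using Ychain_eq_normalized_Aprod[OF transition e_pos Y0_pos norm_Y0, of xs] norm_x by (simp add: x_def)
  then have "Aprod P e (xs @ ys) Y0 = norm x *\<^sub>R Aprod P e ys (Y xs)"
    by (metis Aprod_scaleR fold_append comp_apply x_def)
  then show ?thesis
    unfolding logn_def x_def[symmetric] using norm_x norm_Aprod_pos[OF Y_pos, of ys xs] by (simp add: ln_mult)
qed

lemma logn_snoc: "logn (xs @ [i]) = logn xs + ln (norm (Amap P e i (Y xs)))"
  by (simp add: logn_append)

text \<open>Every \<open>Y xs\<close> lies coordinatewise between \<open>ymin \<cdot> Y0\<close> and \<open>Y0 / \<delta>\<close>, so running the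
  chain from it instead of from Y0 costs at most a bounded factor.\<close>
lemma ln_norm_Aprod_Y_bounds:
  "ln ymin + logn ys \<le> ln (norm (Aprod P e ys (Y xs)))"
  "ln (norm (Aprod P e ys (Y xs))) \<le> logn ys - ln \<delta>"
proof -
  have mono: "norm (Aprod P e ys x) \<le> norm (Aprod P e ys y)" if "\<And>j. 0 < x $ j" "\<And>j. x $ j \<le> y $ j" for x y
    using that by (intro norm_le_if_components_le Aprod_mono[OF transition e_nonneg])
      (auto intro: less_imp_le Aprod_pos[OF transition e_pos])
  have norm_Y0: "0 < norm (Aprod P e ys Y0)"
    by (rule norm_Aprod_pos[OF Y0_pos])
  have "ymin * Y0 $ j \<le> Y xs $ j" for j
    using ymin_le_Y[of xs j] ymin_pos Y0_le_1[of j] by (meson mult_left_le order_trans less_imp_le)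
  then have "ymin * norm (Aprod P e ys Y0) \<le> norm (Aprod P e ys (Y xs))"
    using mono[of "ymin *\<^sub>R Y0" "Y xs"] ymin_pos Y0_pos by (simp add: Aprod_scaleR)
  then have "ln (ymin * norm (Aprod P e ys Y0)) \<le> ln (norm (Aprod P e ys (Y xs)))"
    using ymin_pos norm_Y0 norm_Aprod_pos[OF Y_pos, of ys xs] by simp
  then show "ln ymin + logn ys \<le> ln (norm (Aprod P e ys (Y xs)))"
    unfolding logn_def using ymin_pos norm_Y0 by (simp add: ln_mult)
  have "Y xs $ j \<le> (1 / \<delta>) * Y0 $ j" for j
    using Y_le_1[of xs j] Y0_gt \<delta>_pos by (simp add: less_imp_le order_trans[OF _ less_imp_le])
  then have "norm (Aprod P e ys (Y xs)) \<le> (1 / \<delta>) * norm (Aprod P e ys Y0)"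
    using mono[of "Y xs" "(1 / \<delta>) *\<^sub>R Y0"] Y_pos \<delta>_pos by (simp add: Aprod_scaleR)
  then have "ln (norm (Aprod P e ys (Y xs))) \<le> ln ((1 / \<delta>) * norm (Aprod P e ys Y0))"
    using \<delta>_pos norm_Y0 norm_Aprod_pos[OF Y_pos, of ys xs] by (subst ln_le_cancel_iff) auto
  then show "ln (norm (Aprod P e ys (Y xs))) \<le> logn ys - ln \<delta>"
    unfolding logn_def using \<delta>_pos norm_Y0 by (simp add: ln_mult ln_div)
qed

lemma logn_almost_additive: "\<bar>logn (xs @ ys) - logn xs - logn ys\<bar> \<le> \<bar>ln ymin\<bar> + \<bar>ln \<delta>\<bar>"
  using logn_append[of xs ys] ln_norm_Aprod_Y_bounds[of ys xs] by linarith

lemma logn_bounded_differences: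
  "bounded_differences logn (ln (real CARD('n)) - ln \<delta> - 2 * ln ymin)"
proof -
  have bounds: "2 * ln ymin \<le> logn (xs @ i # ys) - logn xs - logn ys"
    "logn (xs @ i # ys) - logn xs - logn ys \<le> ln (real CARD('n)) - ln \<delta>" for xs ys i
  proof -
    have "logn (xs @ i # ys) = logn xs + ln (norm (Amap P e i (Y xs))) + ln (norm (Aprod P e ys (Y (xs @ [i]))))"
      using logn_append[of "xs @ [i]" ys] logn_snoc[of xs i] by simp
    moreover have "ln ymin \<le> ln (norm (Amap P e i (Y xs)))"
      using norm_Amap_Y_bounds(1)[of i xs] ymin_pos by (metis ln_le_cancel_iff order_less_le_trans)
    moreover have "ln (norm (Amap P e i (Y xs))) \<le> ln (real CARD('n))"
      using norm_Amap_Y_bounds[of i xs] ymin_pos by (metis ln_le_cancel_iff order_less_le_trans)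
    ultimately show "2 * ln ymin \<le> logn (xs @ i # ys) - logn xs - logn ys"
      "logn (xs @ i # ys) - logn xs - logn ys \<le> ln (real CARD('n)) - ln \<delta>"
      using ln_norm_Aprod_Y_bounds[of ys "xs @ [i]"] by linarith+
  qed
  show ?thesis
    unfolding bounded_differences_def
  proof (intro allI)
    fix xs ys i j
    show "\<bar>logn (xs @ i # ys) - logn (xs @ j # ys)\<bar> \<le> ln (real CARD('n)) - ln \<delta> - 2 * ln ymin"
      using bounds[of xs i ys] bounds[of xs j ys] by linarith
  qed
qed

lemma bounded_differences_bound_pos: "ln (real CARD('n)) - ln \<delta> - 2 * ln ymin > 0"
proof -
  have "ymin \<le> 1"
    using ymin_le_Y[of "[]" undefined] Y_le_1[of "[]" undefined] by linarith
  then have "ln ymin \<le> 0"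
    using ymin_pos by simp
  moreover have "ln \<delta> < 0"
    using \<delta>_pos \<delta>_less_1 by simp
  moreover have "0 < ln (real CARD('n))"
    using two_le_card by simp
  ultimately show ?thesis
    by linarith
qed

lemma expectation_logn_Suc:
  "measure_pmf.expectation (Ilaw (Suc k)) logn =
     measure_pmf.expectation (Ilaw k) logn + measure_pmf.expectation (Ilaw k) (\<lambda>xs. mean_log_growth P e (Y xs))"
  unfolding expectation_Ilaw_snoc logn_snoc expectation_uniform mean_log_growth_def
  by (simp add: sum.distrib add_divide_distrib)

text \<open>Weak convergence only tests bounded continuous functions, and \<open>ln |A\<^sub>i y|\<close> is neither.
  It is therefore clipped to \<open>[ymin, d]\<close>, a range the norms \<open>|A\<^sub>i (Y xs)|\<close> never leave. The
  bounded continuous \<open>clipping_defect\<close> vanishes at every \<open>Y xs\<close>, hence \<open>\<nu>\<close>-almost everywhere,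
  so the clipping does not change the integral against \<open>\<nu>\<close>.\<close>
definition clip :: "real \<Rightarrow> real" where
  "clip s = max ymin (min (real CARD('n)) s)"

definition clipped_log_growth :: "real^'n \<Rightarrow> real" where
  "clipped_log_growth y = (\<Sum>i\<in>UNIV. ln (clip (norm (Amap P e i y)))) / real CARD('n)"

definition clipping_defect :: "real^'n \<Rightarrow> real" where
  "clipping_defect y = min 1 (\<Sum>i\<in>UNIV. \<bar>clip (norm (Amap P e i y)) - norm (Amap P e i y)\<bar>)"

lemma clip_norm_Amap_Y: "clip (norm (Amap P e i (Y xs))) = norm (Amap P e i (Y xs))"
  using norm_Amap_Y_bounds[of i xs] unfolding clip_def by simp

lemma continuous_on_clip_norm_Amap: "continuous_on UNIV (\<lambda>y. clip (norm (Amap P e i y)))"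
  unfolding clip_def
  by (intro continuous_intros linear_continuous_on bounded_linear_Amap)

lemma continuous_on_clipped_log_growth: "continuous_on UNIV clipped_log_growth"
proof -
  have "clip s \<noteq> 0" for s
    using ymin_pos by (simp add: clip_def)
  then show ?thesis
    unfolding clipped_log_growth_def
    by (intro continuous_intros continuous_on_clip_norm_Amap) auto
qed

lemma bounded_clipped_log_growth: "bounded (range clipped_log_growth)"
proof -
  define B where "B = \<bar>ln ymin\<bar> + \<bar>ln (max ymin (real CARD('n)))\<bar>"
  have "\<bar>ln (clip s)\<bar> \<le> B" for s
  proof -
    have "ln ymin \<le> ln (clip s)" "ln (clip s) \<le> ln (max ymin (real CARD('n)))"
      using ymin_pos by (simp_all add: clip_def)
    then show ?thesis
      unfolding B_def by linarith
  qed
  then have "\<bar>\<Sum>i\<in>UNIV. ln (clip (norm (Amap P e i y)))\<bar> \<le> real CARD('n) * B" for y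
    by (intro order_trans[OF sum_abs]) (simp add: sum_bounded_above)
  then have "\<bar>clipped_log_growth y\<bar> \<le> B" for y
    unfolding clipped_log_growth_def by (simp add: abs_div field_simps)
  then show ?thesis
    unfolding bounded_real by blast
qed

lemma continuous_on_clipping_defect: "continuous_on UNIV clipping_defect"
  unfolding clipping_defect_def
  by (intro continuous_intros continuous_on_clip_norm_Amap linear_continuous_on bounded_linear_Amap)

lemma bounded_clipping_defect: "bounded (range clipping_defect)"
proof -
  have "\<bar>clipping_defect y\<bar> \<le> 1" for y
    unfolding clipping_defect_def by (simp add: sum_nonneg)
  then show ?thesis
    unfolding bounded_real by blast
qed

lemma clipped_log_growth_eq:
  assumes "clipping_defect y = 0"
  shows "clipped_log_growth y = mean_log_growth P e y"
proof -
  have "(\<Sum>i\<in>UNIV. \<bar>clip (norm (Amap P e i y)) - norm (Amap P e i y)\<bar>) = 0"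
    using assms unfolding clipping_defect_def by (simp add: min_def split: if_splits)
  then have "clip (norm (Amap P e i y)) = norm (Amap P e i y)" for i
    by (simp add: sum_nonneg_eq_0_iff)
  then show ?thesis
    by (simp add: clipped_log_growth_def mean_log_growth_def)
qed

lemma integral_distr_Y:
  fixes f :: "real^'n \<Rightarrow> real"
  assumes "f \<in> borel_measurable borel"
  shows "(\<integral>y. f y \<partial>distr (measure_pmf (Ilaw k)) borel (\<lambda>xs. Y xs)) = measure_pmf.expectation (Ilaw k) (\<lambda>xs. f (Y xs))"
  using assms by (intro integral_distr) auto

lemma expectation_mean_log_growth_tendsto:
  assumes \<nu>: "prob_space \<nu>" "sets \<nu> = sets borel"
    "\<forall>y\<in>Spos. weak_conv_vec (\<lambda>k. distr (measure_pmf (Ilaw k)) borel (\<lambda>xs. Ychain P e xs y)) \<nu>"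
  shows "(\<lambda>k. measure_pmf.expectation (Ilaw k) (\<lambda>xs. mean_log_growth P e (Y xs))) \<longlonglongrightarrow> alpha_const P e \<nu>"
proof -
  interpret \<nu>: prob_space \<nu>
    by (fact \<nu>(1))
  have weak: "weak_conv_vec (\<lambda>k. distr (measure_pmf (Ilaw k)) borel (\<lambda>xs. Y xs)) \<nu>"
    using \<nu>(3) Y0_pos norm_Y0 by (auto simp: Spos_def)
  have meas_borel: "clipped_log_growth \<in> borel_measurable borel" "clipping_defect \<in> borel_measurable borel"
    by (intro borel_measurable_continuous_onI continuous_on_clipped_log_growth continuous_on_clipping_defect)+
  have "(\<integral>y. clipping_defect y \<partial>distr (measure_pmf (Ilaw k)) borel (\<lambda>xs. Y xs)) = 0" for k
    unfolding integral_distr_Y[OF meas_borel(2)] by (simp add: clipping_defect_def clip_norm_Amap_Y)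
  then have "AE y in \<nu>. clipping_defect y = 0"
    by (intro weak_conv_vec_AE_eq_0[OF weak \<nu>(1,2) continuous_on_clipping_defect bounded_clipping_defect])
       (auto simp: clipping_defect_def)
  then have "(\<integral>y. clipped_log_growth y \<partial>\<nu>) = alpha_const P e \<nu>"
    unfolding alpha_const_eq using meas_borel(1) borel_measurable_mean_log_growth measurable_cong_sets[OF \<nu>(2) refl]
    by (intro integral_cong_AE) (auto simp: clipped_log_growth_eq mean_log_growth_def)
  moreover have "(\<lambda>k. \<integral>y. clipped_log_growth y \<partial>distr (measure_pmf (Ilaw k)) borel (\<lambda>xs. Y xs))
                   \<longlonglongrightarrow> (\<integral>y. clipped_log_growth y \<partial>\<nu>)"
    using weak continuous_on_clipped_log_growth bounded_clipped_log_growth unfolding weak_conv_vec_def by blast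
  moreover have "clipped_log_growth (Y xs) = mean_log_growth P e (Y xs)" for xs
    by (simp add: clipped_log_growth_def mean_log_growth_def clip_norm_Amap_Y)
  ultimately show ?thesis
    by (simp add: integral_distr_Y[OF meas_borel(1)])
qed

lemma expectation_logn_linear_bound:
  assumes "prob_space \<nu>" "sets \<nu> = sets borel"
    "\<forall>y\<in>Spos. weak_conv_vec (\<lambda>k. distr (measure_pmf (Ilaw k)) borel (\<lambda>xs. Ychain P e xs y)) \<nu>"
  shows "\<bar>measure_pmf.expectation (Ilaw k) logn - real k * alpha_const P e \<nu>\<bar> \<le> \<bar>ln ymin\<bar> + \<bar>ln \<delta>\<bar>"
  using expectation_logn_Suc expectation_mean_log_growth_tendsto[OF assms]
  by (intro almost_additive_linear_bound expectation_Ilaw_almost_additive logn_almost_additive) simp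

end

theorem lemma3p3:
  fixes P :: "real^'n^'n" and e \<sigma> :: "real^'n" and \<gamma> :: "real measure"
    and \<nu> :: "(real^'n) measure" and \<delta> n :: real and Y0 :: "real^'n"
  assumes d2: "CARD('n) \<ge> 2"
    and P: "transition_matrix P" "irreducible_no_loops P"
    and e: "\<forall>i. 0 < e $ i \<and> e $ i < 1"
    and \<sigma>: "\<forall>i. 0 < \<sigma> $ i"
    and \<gamma>: "prob_space \<gamma>" "sets \<gamma> = sets borel" "absolutely_continuous lborel \<gamma>"
       "integrable \<gamma> (\<lambda>z. z)" "(\<integral>z. z \<partial>\<gamma>) = 0"
    and \<nu>: "prob_space \<nu>" "sets \<nu> = sets borel" "emeasure \<nu> Spos = 1"
       "\<forall>y\<in>Spos. weak_conv_vec (\<lambda>k. distr (measure_pmf (Ilaw k)) borel (\<lambda>is. Ychain P e is y)) \<nu>"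
    and \<delta>: "\<delta> > 0"
    and Y0: "norm Y0 = 1" "\<forall>i. Y0 $ i > \<delta>"
  shows "\<exists>c>0. \<exists>K. \<forall>k\<ge>K. \<forall>t>0. \<forall>n>0.
           measure_pmf.prob (Ilaw k)
             {is. \<bar>ln (norm (EZ_X P e \<sigma> \<gamma> (n *\<^sub>R Y0) is k) / n) - real k * alpha_const P e \<nu>\<bar>
                    \<ge> t * sqrt (real k)}
           \<le> 2 * exp (- c * t\<^sup>2)"
proof -
  interpret positive_start P e \<delta> Y0
    by unfold_locales (use P e \<delta> Y0 d2 in auto)
  define B where "B = ln (real CARD('n)) - ln \<delta> - 2 * ln ymin"
  have B: "B > 0"
    unfolding B_def by (rule bounded_differences_bound_pos)
  have tail: "measure_pmf.prob (Ilaw k) {xs. s \<le> \<bar>logn xs - measure_pmf.expectation (Ilaw k) logn\<bar>}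
      \<le> 2 * exp (- s\<^sup>2 / (real k * (B\<^sup>2 / 2)))" if "0 < k" "0 < s" for k s
    using McDiarmid_inequality[OF logn_bounded_differences[folded B_def] B that] by (simp add: mult.commute)
  obtain c where "c > 0" and c: "\<And>k t. k \<ge> 1 \<Longrightarrow> t > 0 \<Longrightarrow>
      measure_pmf.prob (Ilaw k) {xs. t * sqrt (real k) \<le> \<bar>logn xs - real k * alpha_const P e \<nu>\<bar>} \<le> 2 * exp (- c * t\<^sup>2)"
    using subgaussian_around_line[OF tail _ expectation_logn_linear_bound[OF \<nu>(1,2,4)]] B by auto
  txt \<open>For fixed indices the noise averages out, and \<open>n\<close> scales out of the normalised quantity.\<close>
  have "ln (norm (EZ_X P e \<sigma> \<gamma> (n *\<^sub>R Y0) xs k) / n) = logn xs" if "length xs = k" "n > 0" for xs k n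
    using that by (simp add: EZ_X_eq_Aprod[OF \<gamma>(1,4,5)] Aprod_scaleR logn_def)
  then have "measure_pmf.prob (Ilaw k)
      {xs. t * sqrt (real k) \<le> \<bar>ln (norm (EZ_X P e \<sigma> \<gamma> (n *\<^sub>R Y0) xs k) / n) - real k * alpha_const P e \<nu>\<bar>} =
    measure_pmf.prob (Ilaw k) {xs. t * sqrt (real k) \<le> \<bar>logn xs - real k * alpha_const P e \<nu>\<bar>}" if "n > 0" for k t n
    using that by (intro measure_prob_cong_0) (auto simp: pmf_eq_0_set_pmf set_pmf_Ilaw)
  with \<open>c > 0\<close> c show ?thesis
    by (intro exI[of _ c] exI[of _ 1]) auto
qed

end
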